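(* For every field $\mathbb{K}$, $\mathcal{G}'+\mathcal{G}'=\mathbb{K}((t^{-1}))$.
   Context: $\mathbb{K}((t^{-1}))$ is the field of formal Laurent series $\sum_{n=-\infty}^{\infty}\alpha_n t^{-n}$ over the field $\mathbb{K}$ (only finitely many nonzero $\alpha_n$ with $n<0$), with $\deg\alpha=\sup\{-n:\alpha_n\ne0\}$. Every $\alpha$ has a unique continued fraction expansion $[a_0;a_1,a_2,\dots]$ with $a_n\in\mathbb{K}[t]$, $\deg a_n\ge1$ for $n\ge1$, finite iff $\alpha\in\mathbb{K}(t)$. $a_n(\alpha)$ is the $n$-th partial quotient (when defined) and $d_n(\alpha)=\deg a_n(\alpha)$. $\mathcal{G}'=\{\alpha\in\mathbb{K}((t^{-1})): d_n(\alpha)<d_{n+1}(\alpha) \text{ for every } n\ge1 \text{ such that } a_{n+1}(\alpha) \text{ is defined}\}$. *)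

theory Defs
  imports "HOL-Computational_Algebra.Computational_Algebra"
begin

text \<open>The field K((t^-1)) is rendered as the type 'a fls of formal Laurent series in the
  variable X = t^-1 (finitely many negative powers of X = finitely many positive powers of t).
  The coefficient alpha_n of t^-n is fls_nth f n.  Polynomials in t are 'a poly, embedded via t = X^-1.\<close>

definition laurent_deg :: "'a::zero fls \<Rightarrow> int" where
  "laurent_deg f = - fls_subdegree f"

definition poly_to_laurent :: "'a::comm_ring_1 poly \<Rightarrow> 'a fls" where
  "poly_to_laurent p = (\<Sum>k\<le>degree p. fls_const (coeff p k) * fls_X_inv ^ k)"

text \<open>Polynomial (integer) part: the terms alpha_n t^-n with n \<le> 0, as a polynomial in t.\<close>
definition laurent_ipart :: "'a::zero fls \<Rightarrow> 'a poly" where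
  "laurent_ipart f = Poly (map (\<lambda>k. fls_nth f (- int k)) [0..<nat (- fls_subdegree f) + 1])"

definition laurent_fpart :: "'a::comm_ring_1 fls \<Rightarrow> 'a fls" where
  "laurent_fpart f = f - poly_to_laurent (laurent_ipart f)"

primrec cf_rem :: "'a::field fls \<Rightarrow> nat \<Rightarrow> 'a fls" where
  "cf_rem f 0 = f"
| "cf_rem f (Suc n) = inverse (laurent_fpart (cf_rem f n))"

text \<open>a_n(alpha) is defined iff the expansion has not terminated before step n.\<close>
definition pq_defined :: "'a::field fls \<Rightarrow> nat \<Rightarrow> bool" where
  "pq_defined f n \<longleftrightarrow> (\<forall>k<n. laurent_fpart (cf_rem f k) \<noteq> 0)"

definition partial_quotient :: "'a::field fls \<Rightarrow> nat \<Rightarrow> 'a poly" where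
  "partial_quotient f n = laurent_ipart (cf_rem f n)"

definition pq_deg :: "'a::field fls \<Rightarrow> nat \<Rightarrow> nat" where
  "pq_deg f n = degree (partial_quotient f n)"

definition G' :: "'a::field fls set" where
  "G' = {f. \<forall>n\<ge>1. pq_defined f (n + 1) \<longrightarrow> pq_deg f n < pq_deg f (n + 1)}"

end

theory Submission
  imports Defs
begin

text \<open>
  Let w_n be the fractional part of the n-th complete quotient of a series f, so that
  d_n = deg a_(n+1) is the order of w_n in X = t^-1. Coefficient j of w_n depends only on the
  coefficients of f up to order M = 2 (d_0 + ... + d_(n-1)) + j, and affinely with nonzero
  slope on the one of order M. Reading the coefficients of f in increasing order, each one
  therefore either decides the next coefficient of the w_n under examination, and can be
  chosen to kill it, or only affects lower-order terms of the partial quotient just found.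

  Given \<alpha>, build y coefficient by coefficient and put z = \<alpha> - y. Every new coefficient of y
  (equivalently of z) kills the examined coefficient of one of y and z, which postpones its
  next degree. Serving the side whose next degree would otherwise not exceed the previous one,
  a finite invariant on the pair of reading states shows that this side can always be
  served, so both y and z have strictly increasing degrees of partial quotients.
\<close>

unbundle fps_syntax

lemma coeff_laurent_ipart: "coeff (laurent_ipart f) k = f $$ (- int k)"
proof -
  define L where "L = nat (- fls_subdegree f) + 1"
  have "coeff (laurent_ipart f) k = nth_default 0 (map (\<lambda>k. f $$ (- int k)) [0..<L]) k"
    unfolding laurent_ipart_def L_def by simp
  also have "\<dots> = f $$ (- int k)"
  proof (cases "k < L")
    case False
    then have "- int k < fls_subdegree f" unfolding L_def by linarith
    with False show ?thesis by (simp add: nth_default_def)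
  qed (simp add: nth_default_def)
  finally show ?thesis .
qed

lemma poly_to_laurent_nth:
  "poly_to_laurent p $$ n = (if n \<le> 0 then coeff p (nat (- n)) else 0)"
proof -
  have "poly_to_laurent p $$ n = (\<Sum>k\<le>degree p. coeff p k * (if n = - int k then 1 else 0))"
    unfolding poly_to_laurent_def by (simp add: fls_nth_sum)
  also have "\<dots> = (\<Sum>k\<le>degree p. if k = nat (- n) then (if n \<le> 0 then coeff p k else 0) else 0)"
    by (intro sum.cong) auto
  also have "\<dots> = (if n \<le> 0 then coeff p (nat (- n)) else 0)"
    by (simp add: sum.delta coeff_eq_0)
  finally show ?thesis .
qed

lemma laurent_fpart_nth: "laurent_fpart f $$ n = (if 0 < n then f $$ n else 0)"
  by (simp add: laurent_fpart_def poly_to_laurent_nth coeff_laurent_ipart)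

lemma laurent_fpart_subdegree: "laurent_fpart f \<noteq> 0 \<Longrightarrow> 1 \<le> fls_subdegree (laurent_fpart f)"
  by (metis laurent_fpart_nth nth_fls_subdegree_nonzero int_one_le_iff_zero_less)

lemma degree_laurent_ipart_inverse:
  fixes w :: "'a::field fls"
  assumes "w \<noteq> 0" "1 \<le> fls_subdegree w"
  shows "degree (laurent_ipart (inverse w)) = nat (fls_subdegree w)"
proof (rule antisym)
  have sd: "fls_subdegree (inverse w) = - fls_subdegree w" by simp
  show "degree (laurent_ipart (inverse w)) \<le> nat (fls_subdegree w)"
    by (rule degree_le) (simp add: coeff_laurent_ipart sd)
  have "coeff (laurent_ipart (inverse w)) (nat (fls_subdegree w)) \<noteq> 0"
    using assms nth_fls_subdegree_nonzero[of "inverse w"] by (simp add: coeff_laurent_ipart)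
  then show "nat (fls_subdegree w) \<le> degree (laurent_ipart (inverse w))"
    by (rule le_degree)
qed

lemma fls_times_nth_lower:
  fixes A B :: "'a::semiring_0 fls"
  assumes "\<forall>k<a. A $$ k = 0" and "\<forall>k<b. B $$ k = 0"
  shows "\<forall>k<a + b. (A * B) $$ k = 0" and "(A * B) $$ (a + b) = A $$ a * B $$ b"
proof -
  have "(\<forall>k<a + b. (A * B) $$ k = 0) \<and> (A * B) $$ (a + b) = A $$ a * B $$ b"
  proof (cases "A = 0 \<or> B = 0")
    case False
    then have sa: "a \<le> fls_subdegree A" and sb: "b \<le> fls_subdegree B"
      using assms by (auto intro: fls_subdegree_geI)
    have "(A * B) $$ (a + b) = A $$ a * B $$ b"
    proof (cases "a = fls_subdegree A \<and> b = fls_subdegree B")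
      case True
      then show ?thesis using fls_times_nth(4)[of A B "a + b"] by simp
    next
      case False
      then have "a < fls_subdegree A \<or> b < fls_subdegree B" using sa sb by auto
      then show ?thesis using fls_times_nth_eq0[of "a + b" A B] sa sb by auto
    qed
    then show ?thesis using sa sb by (auto intro: fls_times_nth_eq0)
  qed auto
  then show "\<forall>k<a + b. (A * B) $$ k = 0" and "(A * B) $$ (a + b) = A $$ a * B $$ b"
    by auto
qed

lemma inverse_fls_perturb:
  fixes a b :: "'a::field fls"
  assumes a: "a \<noteq> 0" and s: "fls_subdegree a < s" and agree: "\<forall>k<s. b $$ k = a $$ k"
  defines "d \<equiv> fls_subdegree a"
  shows "\<forall>k<s - 2 * d. inverse b $$ k = inverse a $$ k"
    and "inverse b $$ (s - 2 * d) - inverse a $$ (s - 2 * d) = (a $$ s - b $$ s) / (a $$ d)\<^sup>2"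
proof -
  have bd: "b $$ d = a $$ d" using agree s by (simp add: d_def)
  then have "b $$ d \<noteq> 0" using a by (simp add: d_def)
  then have b: "b \<noteq> 0" and sb: "fls_subdegree b = d"
    using agree s by (auto intro!: fls_subdegree_eqI simp: d_def)
  have inv_a: "\<forall>k < - d. inverse a $$ k = 0" "inverse a $$ (- d) = inverse (a $$ d)"
    using a by (auto simp: d_def fls_inverse_base)
  have inv_b: "\<forall>k < - d. inverse b $$ k = 0" "inverse b $$ (- d) = inverse (a $$ d)"
    using b sb bd by (auto simp: fls_inverse_base[of b])
  have diff_low: "\<forall>k<s. (a - b) $$ k = 0" using agree by simp
  have "s - 2 * d = s + - d + - d" by simp
  then have low: "\<forall>k<s - 2 * d. ((a - b) * inverse a * inverse b) $$ k = 0"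
    and top: "((a - b) * inverse a * inverse b) $$ (s - 2 * d) = (a $$ s - b $$ s) / (a $$ d)\<^sup>2"
    using fls_times_nth_lower[OF fls_times_nth_lower(1)[OF diff_low inv_a(1)] inv_b(1)]
      fls_times_nth_lower(2)[OF diff_low inv_a(1)] inv_a(2) inv_b(2)
    by (simp_all add: power2_eq_square divide_inverse inverse_mult_distrib)
  have "inverse b - inverse a = (a - b) * inverse a * inverse b"
    using a b by (simp add: field_simps)
  then have coeff_diff: "inverse b $$ k - inverse a $$ k = ((a - b) * inverse a * inverse b) $$ k"
    for k by (metis fls_minus_nth)
  show "\<forall>k<s - 2 * d. inverse b $$ k = inverse a $$ k"
    using low coeff_diff by (metis right_minus_eq)
  show "inverse b $$ (s - 2 * d) - inverse a $$ (s - 2 * d) = (a $$ s - b $$ s) / (a $$ d)\<^sup>2"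
    using top coeff_diff by simp
qed

definition cf_frac :: "'a::field fls \<Rightarrow> nat \<Rightarrow> 'a fls" where
  "cf_frac f n = laurent_fpart (cf_rem f n)"

lemma cf_frac_0: "cf_frac f 0 = laurent_fpart f"
  by (simp add: cf_frac_def)

lemma cf_frac_Suc: "cf_frac f (Suc n) = laurent_fpart (inverse (cf_frac f n))"
  by (simp add: cf_frac_def)

definition cf_deg :: "'a::field fls \<Rightarrow> nat \<Rightarrow> nat" where
  "cf_deg f n = nat (fls_subdegree (cf_frac f n))"

definition cf_deg_sum :: "'a::field fls \<Rightarrow> nat \<Rightarrow> nat" where
  "cf_deg_sum f n = (\<Sum>k<n. cf_deg f k)"

lemma cf_deg_sum_Suc: "cf_deg_sum f (Suc n) = cf_deg_sum f n + cf_deg f n"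
  by (simp add: cf_deg_sum_def)

lemma cf_deg_sum_mono: "m \<le> n \<Longrightarrow> cf_deg_sum f m \<le> cf_deg_sum f n"
  unfolding cf_deg_sum_def by (rule sum_mono2) auto

lemma cf_frac_nonpos [simp]: "k \<le> 0 \<Longrightarrow> cf_frac f n $$ k = 0"
  by (simp add: cf_frac_def laurent_fpart_nth)

lemma cf_frac_subdegree: "cf_frac f n \<noteq> 0 \<Longrightarrow> fls_subdegree (cf_frac f n) = int (cf_deg f n)"
  using laurent_fpart_subdegree[of "cf_rem f n"] by (simp add: cf_deg_def cf_frac_def)

lemma cf_deg_pos: "cf_frac f n \<noteq> 0 \<Longrightarrow> 1 \<le> cf_deg f n"
  using laurent_fpart_subdegree[of "cf_rem f n"] by (simp add: cf_deg_def cf_frac_def)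

lemma pq_defined_iff: "pq_defined f n \<longleftrightarrow> (\<forall>k<n. cf_frac f k \<noteq> 0)"
  by (simp add: pq_defined_def cf_frac_def)

lemma pq_deg_Suc: "cf_frac f m \<noteq> 0 \<Longrightarrow> pq_deg f (Suc m) = cf_deg f m"
  unfolding pq_deg_def partial_quotient_def cf_deg_def cf_rem.simps(2) cf_frac_def[symmetric]
  by (metis degree_laurent_ipart_inverse cf_deg_pos cf_frac_subdegree of_nat_1 of_nat_le_iff)

lemma G'I:
  assumes "\<And>m. \<forall>k<m + 2. cf_frac f k \<noteq> 0 \<Longrightarrow> cf_deg f m < cf_deg f (Suc m)"
  shows "f \<in> G'"
  unfolding G'_def
proof (intro CollectI allI impI)
  fix n :: nat assume "1 \<le> n" and "pq_defined f (n + 1)"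
  then obtain m where "n = Suc m" and "\<forall>k<m + 2. cf_frac f k \<noteq> 0"
    by (cases n) (auto simp: pq_defined_iff)
  then show "pq_deg f n < pq_deg f (n + 1)"
    using assms pq_deg_Suc[of f m] pq_deg_Suc[of f "Suc m"] by simp
qed

definition cf_slope :: "'a::field fls \<Rightarrow> nat \<Rightarrow> 'a" where
  "cf_slope f n = (\<Prod>k<n. - inverse ((cf_frac f k $$ int (cf_deg f k))\<^sup>2))"

lemma cf_slope_nonzero: "\<forall>k<n. cf_frac f k \<noteq> 0 \<Longrightarrow> cf_slope f n \<noteq> 0"
  by (auto simp: cf_slope_def cf_frac_subdegree[symmetric])

lemma cf_frac_perturb:
  fixes f h :: "'a::field fls"
  assumes agree: "\<forall>k<M. h $$ k = f $$ k"
    and "\<forall>k<n. cf_frac f k \<noteq> 0" and "2 * int (cf_deg_sum f n) < M"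
  shows "(\<forall>p<M - 2 * int (cf_deg_sum f n). cf_frac h n $$ p = cf_frac f n $$ p) \<and>
    cf_frac h n $$ (M - 2 * int (cf_deg_sum f n)) - cf_frac f n $$ (M - 2 * int (cf_deg_sum f n))
      = cf_slope f n * (h $$ M - f $$ M)"
  using assms(2,3)
proof (induction n)
  case 0
  show ?case using agree 0 by (simp add: cf_frac_0 laurent_fpart_nth cf_slope_def cf_deg_sum_def)
next
  case (Suc n)
  define a b s d where "a = cf_frac f n" and "b = cf_frac h n"
    and "s = M - 2 * int (cf_deg_sum f n)" and "d = fls_subdegree a"
  have a: "a \<noteq> 0" using Suc.prems by (simp add: a_def)
  have d: "d = int (cf_deg f n)" "1 \<le> d"
    using cf_frac_subdegree[OF a[unfolded a_def]] cf_deg_pos[OF a[unfolded a_def]]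
    by (simp_all add: a_def d_def)
  have s: "2 * d < s" and s_Suc: "M - 2 * int (cf_deg_sum f (Suc n)) = s - 2 * d"
    using Suc.prems(2) d by (simp_all add: s_def cf_deg_sum_Suc)
  have IH: "\<forall>p<s. b $$ p = a $$ p" "b $$ s - a $$ s = cf_slope f n * (h $$ M - f $$ M)"
    using Suc cf_deg_sum_Suc[of f n] by (auto simp: a_def b_def s_def)
  have "fls_subdegree a < s" using s d by (simp add: d_def)
  note P = inverse_fls_perturb[OF a this IH(1), folded d_def]
  have slope_Suc: "cf_slope f (Suc n) = - cf_slope f n / (a $$ d)\<^sup>2"
    by (simp add: cf_slope_def a_def d(1) divide_inverse)
  have pos: "0 < s - 2 * d" using s d by simp
  show ?case
  proof
    show "\<forall>p<M - 2 * int (cf_deg_sum f (Suc n)). cf_frac h (Suc n) $$ p = cf_frac f (Suc n) $$ p"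
      using P(1) s by (simp add: s_Suc cf_frac_Suc laurent_fpart_nth flip: a_def b_def)
    have "a $$ s - b $$ s = - cf_slope f n * (h $$ M - f $$ M)"
      by (metis IH(2) minus_diff_eq mult_minus_left)
    then have "cf_frac h (Suc n) $$ (s - 2 * d) - cf_frac f (Suc n) $$ (s - 2 * d)
        = cf_slope f (Suc n) * (h $$ M - f $$ M)"
      using P(2) s pos
      by (simp add: cf_frac_Suc laurent_fpart_nth slope_Suc divide_inverse mult_ac flip: a_def b_def)
    then show "cf_frac h (Suc n) $$ (M - 2 * int (cf_deg_sum f (Suc n)))
        - cf_frac f (Suc n) $$ (M - 2 * int (cf_deg_sum f (Suc n)))
        = cf_slope f (Suc n) * (h $$ M - f $$ M)"
      by (simp only: s_Suc)
  qed
qed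

text \<open>
  phase_at f i is the state in which coefficient i + 1 of f is read. In Scan n j e the
  coefficients of w_n below j vanish, coefficient j is being decided, and e = d_(n-1); the state
  is urgent if j \<le> e, since a nonzero coefficient would then violate d_(n-1) < d_n. In
  Skip n k d the degree d_n = d is known and the next k coefficients of f only affect
  lower-order terms of a_(n+1).
\<close>
datatype phase = Scan nat nat nat | Skip nat nat nat

fun phase_step :: "phase \<Rightarrow> bool \<Rightarrow> phase" where
  "phase_step (Scan n j e) z = (if z then Scan n (j + 1) e else Skip n j j)"
| "phase_step (Skip n k d) z = (if 1 < k then Skip n (k - 1) d else Scan (n + 1) 1 d)"

fun scan_zero :: "'a::field fls \<Rightarrow> phase \<Rightarrow> bool" where
  "scan_zero f (Scan n j e) \<longleftrightarrow> cf_frac f n $$ int j = 0"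
| "scan_zero f (Skip n k d) \<longleftrightarrow> True"

primrec phase_at :: "'a::field fls \<Rightarrow> nat \<Rightarrow> phase" where
  "phase_at f 0 = Scan 0 1 0"
| "phase_at f (Suc i) = phase_step (phase_at f i) (scan_zero f (phase_at f i))"

definition prev_cf_deg :: "'a::field fls \<Rightarrow> nat \<Rightarrow> nat" where
  "prev_cf_deg f n = (if n = 0 then 0 else cf_deg f (n - 1))"

fun phase_sound :: "'a::field fls \<Rightarrow> nat \<Rightarrow> phase \<Rightarrow> bool" where
  "phase_sound f i (Scan n j e) \<longleftrightarrow> (\<forall>k<n. cf_frac f k \<noteq> 0) \<and> i + 1 = 2 * cf_deg_sum f n + j
      \<and> 1 \<le> j \<and> (\<forall>p<int j. cf_frac f n $$ p = 0) \<and> e = prev_cf_deg f n"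
| "phase_sound f i (Skip n k d) \<longleftrightarrow> (\<forall>m\<le>n. cf_frac f m \<noteq> 0) \<and> d = cf_deg f n
      \<and> 1 \<le> k \<and> k \<le> d \<and> i + k = 2 * cf_deg_sum f n + 2 * d"

lemma phase_sound_phase_at: "phase_sound f i (phase_at f i)"
proof (induction i)
  case (Suc i)
  show ?case
  proof (cases "phase_at f i")
    case (Scan n j e)
    with Suc.IH have IH: "(\<forall>k<n. cf_frac f k \<noteq> 0) \<and> i + 1 = 2 * cf_deg_sum f n + j
        \<and> 1 \<le> j \<and> (\<forall>p<int j. cf_frac f n $$ p = 0) \<and> e = prev_cf_deg f n"
      by simp
    show ?thesis
    proof (cases "cf_frac f n $$ int j = 0")
      case True
      have "\<forall>p<int (j + 1). cf_frac f n $$ p = 0"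
      proof (intro allI impI)
        fix p :: int assume "p < int (j + 1)"
        then have "p < int j \<or> p = int j" by linarith
        then show "cf_frac f n $$ p = 0" using IH True by auto
      qed
      moreover have "phase_at f (Suc i) = Scan n (j + 1) e" using Scan True by simp
      ultimately show ?thesis using IH by (simp only:) simp
    next
      case False
      then have "cf_frac f n \<noteq> 0" and "fls_subdegree (cf_frac f n) = int j"
        using IH by (auto intro: fls_subdegree_eqI)
      then have "cf_deg f n = j" and "\<forall>m\<le>n. cf_frac f m \<noteq> 0"
        using IH cf_frac_subdegree[of f n] by (auto simp: le_less)
      moreover have "phase_at f (Suc i) = Skip n j j" using Scan False by simp
      ultimately show ?thesis using IH by (simp only:) simp
    qed
  next
    case (Skip n k d)
    then show ?thesis
      using Suc.IH by (cases "1 < k") (auto simp: cf_deg_sum_Suc prev_cf_deg_def less_Suc_eq_le)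
  qed
qed (simp add: prev_cf_deg_def cf_deg_sum_def)

lemma phase_at_Scan_window:
  assumes "phase_at f i = Scan n j e"
  shows "2 * cf_deg_sum f n \<le> i" and "cf_frac f n \<noteq> 0 \<Longrightarrow> i < 2 * cf_deg_sum f n + cf_deg f n"
proof -
  have S: "i + 1 = 2 * cf_deg_sum f n + j \<and> 1 \<le> j \<and> (\<forall>p<int j. cf_frac f n $$ p = 0)"
    using assms phase_sound_phase_at[of f i] by simp
  then show "2 * cf_deg_sum f n \<le> i" by linarith
  assume "cf_frac f n \<noteq> 0"
  then have "int j \<le> int (cf_deg f n)"
    using S cf_frac_subdegree[of f n] fls_subdegree_geI[of "cf_frac f n" "int j"] by simp
  then show "i < 2 * cf_deg_sum f n + cf_deg f n" using S by linarith
qed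

lemma phase_at_Skip_window:
  assumes "phase_at f i = Skip n k d"
  shows "2 * cf_deg_sum f n + cf_deg f n \<le> i" and "i < 2 * cf_deg_sum f (Suc n)"
  using assms phase_sound_phase_at[of f i] by (simp_all add: cf_deg_sum_Suc)

lemma phase_at_cf_deg:
  assumes nz: "\<forall>k\<le>N. cf_frac f k \<noteq> 0"
  defines "d \<equiv> cf_deg f N"
  shows "phase_at f (2 * cf_deg_sum f N + d - 1) = Scan N d (prev_cf_deg f N)"
proof -
  define i where "i = 2 * cf_deg_sum f N + d - 1"
  have d_pos: "1 \<le> d" using cf_deg_pos[of f N] nz by (simp add: d_def)
  then have i: "i + 1 = 2 * cf_deg_sum f N + d" by (simp add: i_def)
  have before: "2 * cf_deg_sum f (Suc n) \<le> i" if "n < N" for n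
    using cf_deg_sum_mono[of "Suc n" N f] that i d_pos by simp
  have after: "i < 2 * cf_deg_sum f n" if "N < n" for n
    using cf_deg_sum_mono[of "Suc N" n f] that i by (simp add: cf_deg_sum_Suc d_def)
  have "phase_at f i = Scan N d (prev_cf_deg f N)"
  proof (cases "phase_at f i")
    case (Scan n j e)
    note window = phase_at_Scan_window[OF Scan]
    have "n = N"
    proof (rule linorder_cases[of n N])
      assume "n < N"
      then show ?thesis
        using before[of n] window(2) nz by (simp add: cf_deg_sum_Suc)
    next
      assume "N < n"
      then show ?thesis using after[of n] window(1) by simp
    qed
    moreover have "i + 1 = 2 * cf_deg_sum f n + j \<and> e = prev_cf_deg f n"
      using Scan phase_sound_phase_at[of f i] by simp
    ultimately show ?thesis using Scan i by simp
  next
    case (Skip n k d')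
    note window = phase_at_Skip_window[OF Skip]
    have False
    proof (rule linorder_cases[of n N])
      assume "n < N"
      then show False using before[of n] window(2) by simp
    next
      assume "n = N"
      then show False using window(1) i by (simp add: d_def)
    next
      assume "N < n"
      then show False using after[of n] window(1) by simp
    qed
    then show ?thesis ..
  qed
  then show ?thesis by (simp add: i_def)
qed

lemma phase_at_local: "\<forall>k\<le>int i. h $$ k = f $$ k \<Longrightarrow> phase_at h i = phase_at f i"
proof (induction i)
  case (Suc i)
  then have IH: "phase_at h i = phase_at f i" by simp
  show ?case
  proof (cases "phase_at f i")
    case (Scan n j e)
    then have "(\<forall>k<n. cf_frac f k \<noteq> 0) \<and> i + 1 = 2 * cf_deg_sum f n + j \<and> 1 \<le> j"
      using phase_sound_phase_at[of f i] by simp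
    moreover have "\<forall>k<int i + 2. h $$ k = f $$ k" using Suc.prems by simp
    ultimately have "cf_frac h n $$ int j = cf_frac f n $$ int j"
      using cf_frac_perturb[of "int i + 2" h f n] by simp
    then show ?thesis using IH Scan by simp
  qed (simp add: IH)
qed simp

text \<open>Solves the affine relation of cf_frac_perturb for a vanishing coefficient.\<close>
definition zeroing_coeff :: "'a::field fls \<Rightarrow> nat \<Rightarrow> 'a" where
  "zeroing_coeff f i = (case phase_at f i of
      Scan n j e \<Rightarrow> f $$ (int i + 1) - cf_frac f n $$ int j / cf_slope f n
    | Skip _ _ _ \<Rightarrow> 0)"

lemma scan_zero_zeroing_coeff:
  assumes agree: "\<forall>k\<le>int i. h $$ k = f $$ k" and chosen: "h $$ (int i + 1) = zeroing_coeff f i"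
  shows "scan_zero h (phase_at h i)"
proof (cases "phase_at f i")
  case (Scan n j e)
  then have sound: "(\<forall>k<n. cf_frac f k \<noteq> 0) \<and> i + 1 = 2 * cf_deg_sum f n + j \<and> 1 \<le> j"
    using phase_sound_phase_at[of f i] by simp
  then have "cf_slope f n \<noteq> 0" by (simp add: cf_slope_nonzero)
  have pos: "int i + 1 - 2 * int (cf_deg_sum f n) = int j" using sound by simp
  have "\<forall>k<int i + 1. h $$ k = f $$ k" using agree by simp
  then have "cf_frac h n $$ int j - cf_frac f n $$ int j
      = cf_slope f n * (h $$ (int i + 1) - f $$ (int i + 1))"
    using sound cf_frac_perturb[of "int i + 1" h f n, unfolded pos] by simp
  with \<open>cf_slope f n \<noteq> 0\<close> have "cf_frac h n $$ int j = 0"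
    using chosen Scan by (simp add: zeroing_coeff_def)
  then show ?thesis using Scan phase_at_local[OF agree] by simp
qed (simp add: phase_at_local[OF agree])

fun urgent :: "phase \<Rightarrow> bool" where
  "urgent (Scan n j e) \<longleftrightarrow> j \<le> e"
| "urgent (Skip n k d) \<longleftrightarrow> False"

fun serve_left :: "phase \<Rightarrow> phase \<Rightarrow> bool" where
  "serve_left (Scan n j e) t \<longleftrightarrow> \<not> urgent t"
| "serve_left (Skip n k d) t \<longleftrightarrow> False"

fun scan_ok :: "phase \<Rightarrow> bool \<Rightarrow> bool" where
  "scan_ok (Scan n j e) z \<longleftrightarrow> z \<or> e < j"
| "scan_ok (Skip n k d) z \<longleftrightarrow> True"

fun phase_wf :: "phase \<Rightarrow> bool" where
  "phase_wf (Scan n j e) \<longleftrightarrow> 1 \<le> j"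
| "phase_wf (Skip n k d) \<longleftrightarrow> 1 \<le> k \<and> k \<le> d"

text \<open>
  While one side skips, every chosen coefficient serves the other side, whose scan position
  therefore advances; these bounds guarantee that an urgent side stops being urgent before
  the other one needs to be served again.
\<close>
fun phase_compat :: "phase \<Rightarrow> phase \<Rightarrow> bool" where
  "phase_compat (Scan n j e) (Scan n' j' e') \<longleftrightarrow> \<not> (j \<le> e \<and> j' \<le> e') \<and> (j \<le> e \<longrightarrow> e \<le> j + j')"
| "phase_compat (Scan n j e) (Skip n' k d) \<longleftrightarrow> True"
| "phase_compat (Skip n k d) (Scan n' j' e') \<longleftrightarrow> (j' \<le> e' \<longrightarrow> e' < k + j') \<and> d \<le> j' + k + 1"
| "phase_compat (Skip n k d) (Skip n' k' d') \<longleftrightarrow> False"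

definition phases_ok :: "phase \<Rightarrow> phase \<Rightarrow> bool" where
  "phases_ok s t \<longleftrightarrow> phase_wf s \<and> phase_wf t \<and> phase_compat s t \<and> phase_compat t s"

lemma phases_ok_step:
  assumes "phases_ok s t" and "if serve_left s t then zs else zt"
  shows "phases_ok (phase_step s zs) (phase_step t zt)"
  using assms unfolding phases_ok_def by (cases s; cases t) (auto split: if_splits)

lemma phases_ok_scan_ok:
  assumes "phases_ok s t" and "if serve_left s t then zs else zt"
  shows "scan_ok s zs \<and> scan_ok t zt"
  using assms unfolding phases_ok_def by (cases s; cases t) (auto split: if_splits)

definition split_coeff :: "'a::field fls \<Rightarrow> 'a fls \<Rightarrow> nat \<Rightarrow> 'a" where
  "split_coeff x y i = (if serve_left (phase_at y i) (phase_at (x - y) i) then zeroing_coeff y i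
     else x $$ (int i + 1) - zeroing_coeff (x - y) i)"

primrec split_prefix :: "'a::field fls \<Rightarrow> nat \<Rightarrow> 'a fls" where
  "split_prefix x 0 = 0"
| "split_prefix x (Suc i) =
     split_prefix x i + fls_const (split_coeff x (split_prefix x i) i) * fls_X ^ Suc i"

definition split_series :: "'a::field fls \<Rightarrow> 'a fls" where
  "split_series x = fps_to_fls (Abs_fps (\<lambda>k. if k = 0 then 0 else split_prefix x k $$ int k))"

lemma split_prefix_nth:
  "split_prefix x i $$ k = (if 1 \<le> k \<and> k \<le> int i then split_prefix x (nat k) $$ k else 0)"
proof (induction i arbitrary: k)
  case (Suc i)
  show ?case
  proof (cases "k = int i + 1")
    case False
    then have "split_prefix x (Suc i) $$ k = split_prefix x i $$ k" by (simp del: power_Suc)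
    then show ?thesis using Suc[of k] False by auto
  next
    case True
    then have "nat k = Suc i" by simp
    then show ?thesis using True by auto
  qed
qed simp

lemma split_series_nth: "split_series x $$ k = (if 1 \<le> k then split_prefix x (nat k) $$ k else 0)"
  by (auto simp: split_series_def)

lemma split_series_agree: "\<forall>k\<le>int i. split_series x $$ k = split_prefix x i $$ k"
  using split_prefix_nth[of x i] by (auto simp: split_series_nth)

lemma split_series_nth_Suc: "split_series x $$ (int i + 1) = split_coeff x (split_prefix x i) i"
proof -
  have "split_prefix x i $$ (int i + 1) = 0" using split_prefix_nth[of x i] by simp
  then have "split_prefix x (Suc i) $$ (int i + 1) = split_coeff x (split_prefix x i) i"
    by (simp del: power_Suc)
  moreover have "nat (int i + 1) = Suc i" by simp
  ultimately show ?thesis by (simp only: split_series_nth) simp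
qed

lemma split_series_serves:
  fixes x :: "'a::field fls"
  defines "y \<equiv> split_series x"
  shows "if serve_left (phase_at y i) (phase_at (x - y) i) then scan_zero y (phase_at y i)
    else scan_zero (x - y) (phase_at (x - y) i)"
proof -
  define t where "t = split_prefix x i"
  have agree_y: "\<forall>k\<le>int i. y $$ k = t $$ k"
    using split_series_agree by (simp add: y_def t_def)
  then have agree_z: "\<forall>k\<le>int i. (x - y) $$ k = (x - t) $$ k" by simp
  have phases: "phase_at y i = phase_at t i" "phase_at (x - y) i = phase_at (x - t) i"
    using phase_at_local[OF agree_y] phase_at_local[OF agree_z] by simp_all
  have chosen: "y $$ (int i + 1) = split_coeff x t i"
    using split_series_nth_Suc by (simp add: y_def t_def)
  show ?thesis
  proof (cases "serve_left (phase_at t i) (phase_at (x - t) i)")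
    case True
    then have "y $$ (int i + 1) = zeroing_coeff t i" using chosen by (simp add: split_coeff_def)
    then show ?thesis using True phases scan_zero_zeroing_coeff[OF agree_y] by simp
  next
    case False
    then have "(x - y) $$ (int i + 1) = zeroing_coeff (x - t) i"
      using chosen by (simp add: split_coeff_def)
    then show ?thesis using False phases scan_zero_zeroing_coeff[OF agree_z] by simp
  qed
qed

lemma split_series_phases_ok:
  fixes x :: "'a::field fls"
  defines "y \<equiv> split_series x"
  shows "phases_ok (phase_at y i) (phase_at (x - y) i)"
proof (induction i)
  case 0
  show ?case by (simp add: phases_ok_def)
next
  case (Suc i)
  then show ?case using phases_ok_step split_series_serves[of x i] by (simp add: y_def)
qed

lemma split_series_scan_ok:
  fixes x :: "'a::field fls"
  defines "y \<equiv> split_series x"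
  shows "scan_ok (phase_at y i) (scan_zero y (phase_at y i))"
    and "scan_ok (phase_at (x - y) i) (scan_zero (x - y) (phase_at (x - y) i))"
  using phases_ok_scan_ok[OF split_series_phases_ok[of x i] split_series_serves[of x i]]
  by (simp_all add: y_def)

lemma G'I_scan_ok:
  assumes "\<And>i. scan_ok (phase_at f i) (scan_zero f (phase_at f i))"
  shows "f \<in> G'"
proof (rule G'I)
  fix m assume nz: "\<forall>k<m + 2. cf_frac f k \<noteq> 0"
  then have "phase_at f (2 * cf_deg_sum f (Suc m) + cf_deg f (Suc m) - 1)
      = Scan (Suc m) (cf_deg f (Suc m)) (cf_deg f m)"
    using phase_at_cf_deg[of "Suc m" f] by (simp add: prev_cf_deg_def)
  moreover have "cf_frac f (Suc m) $$ int (cf_deg f (Suc m)) \<noteq> 0"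
    using nz cf_frac_subdegree[of f "Suc m"] nth_fls_subdegree_nonzero[of "cf_frac f (Suc m)"] by simp
  ultimately show "cf_deg f m < cf_deg f (Suc m)"
    using assms[of "2 * cf_deg_sum f (Suc m) + cf_deg f (Suc m) - 1"] by simp
qed

theorem theorem1p4:
  fixes \<alpha> :: "'a::field fls"
  shows "\<exists>\<beta> \<gamma>. \<beta> \<in> G' \<and> \<gamma> \<in> G' \<and> \<alpha> = \<beta> + \<gamma>"
proof (intro exI conjI)
  show "split_series \<alpha> \<in> G'" and "\<alpha> - split_series \<alpha> \<in> G'"
    using split_series_scan_ok[of \<alpha>] by (auto intro: G'I_scan_ok)
qed simp

end
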